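(* Let $m\ge2$. Let $\mathcal K_{\rm sym}$ be the set of maps $K:\{0,1\}^m\to\{\pm1\}$ with $K(x_1,x_2,\dots,x_m)=K(1-x_1,x_2,\dots,x_m)$ for all $x$. Let $\mathcal Z$ be the set of pairs $(a,q)$, $q\in\{0,1\}^m$, $a=(a_1,\dots,a_m)$ with $a_i:X_i\to\{\pm1\}$, such that there is $K\in\mathcal K_{\rm sym}$ with $a_i=K|_{X_i}$ for all $i$, and $\prod_{x\in X_1}a_1(x)=(-1)^{q_1}$. Define $P(a|q)=2^{-(2^{m-1}-1)}$ if $(a,q)\in\mathcal Z$ and $P(a|q)=0$ otherwise. Then $P$ is a no-signalling correlation (for each $q$, $P(\cdot|q)$ is a probability distribution, and for each $i$, $\sum_{a_i}P(a|q)$ does not depend on $q_i$), and every $(a,q)$ with $P(a|q)>0$ wins $\mathrm{HC}_m$; consequently $P$ wins $\mathrm{HC}_m$ with probability $1$.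
   Context: The $m$-player Hypercube game $\mathrm{HC}_m$: the question $q=(q_1,\dots,q_m)\in\{0,1\}^m$ is uniformly random and player $i$ receives $q_i$. Player $i$ must answer a function $a_i:X_i\to\{+1,-1\}$ where $X_i=\{x\in\{0,1\}^m: x_i=q_i\}$. The players win iff (Parity) $\prod_{x\in X_1}a_1(x)=(-1)^{q_1}$ and $\prod_{x\in X_i}a_i(x)=1$ for all $i\ge2$; and (Consistency) $a_i(x)=a_j(x)$ for all $i\ne j$ and all $x\in X_i\cap X_j$. *)

theory Defs
  imports "HOL-Library.FuncSet" Complex_Main
begin

text \<open>Bit strings in {0,1}^m are boolean lists of length m (True = 1).
  Players are indexed 0..m-1; the paper's player 1 is index 0.\<close>

definition cube :: "nat \<Rightarrow> bool list set" where
  "cube m = {x. length x = m}"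

definition Xset :: "nat \<Rightarrow> nat \<Rightarrow> bool \<Rightarrow> bool list set" where
  "Xset m i c = {x \<in> cube m. x ! i = c}"

definition answers :: "nat \<Rightarrow> nat \<Rightarrow> bool \<Rightarrow> (bool list \<Rightarrow> int) set" where
  "answers m i c = Xset m i c \<rightarrow>\<^sub>E {1, -1}"

definition answer_tuples :: "nat \<Rightarrow> bool list \<Rightarrow> (nat \<Rightarrow> bool list \<Rightarrow> int) set" where
  "answer_tuples m q = (\<Pi>\<^sub>E i\<in>{..<m}. answers m i (q ! i))"

definition sgn_bit :: "bool \<Rightarrow> int" where
  "sgn_bit b = (if b then -1 else 1)"

definition win :: "nat \<Rightarrow> bool list \<Rightarrow> (nat \<Rightarrow> bool list \<Rightarrow> int) \<Rightarrow> bool" where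
  "win m q a \<longleftrightarrow>
     (\<Prod>x\<in>Xset m 0 (q ! 0). a 0 x) = sgn_bit (q ! 0) \<and>
     (\<forall>i\<in>{1..<m}. (\<Prod>x\<in>Xset m i (q ! i). a i x) = 1) \<and>
     (\<forall>i<m. \<forall>j<m. i \<noteq> j \<longrightarrow>
        (\<forall>x \<in> Xset m i (q ! i) \<inter> Xset m j (q ! j). a i x = a j x))"

definition Ksym :: "nat \<Rightarrow> (bool list \<Rightarrow> int) set" where
  "Ksym m = {K \<in> cube m \<rightarrow>\<^sub>E {1, -1}. \<forall>x\<in>cube m. K x = K (x[0 := \<not> x ! 0])}"

definition Zset :: "nat \<Rightarrow> ((nat \<Rightarrow> bool list \<Rightarrow> int) \<times> bool list) set" where
  "Zset m = {(a, q). q \<in> cube m \<and> a \<in> answer_tuples m q \<and>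
      (\<exists>K\<in>Ksym m. \<forall>i<m. a i = restrict K (Xset m i (q ! i))) \<and>
      (\<Prod>x\<in>Xset m 0 (q ! 0). a 0 x) = sgn_bit (q ! 0)}"

definition Pcorr :: "nat \<Rightarrow> (nat \<Rightarrow> bool list \<Rightarrow> int) \<Rightarrow> bool list \<Rightarrow> real" where
  "Pcorr m a q = (if (a, q) \<in> Zset m then 1 / 2 ^ (2 ^ (m - 1) - 1) else 0)"

end

theory Submission
  imports Defs
begin

text \<open>
  Every pair in Z is of the form (restrictions of K to the players' hyperplanes, q) for a map K
  on the cube that is invariant under flipping the first coordinate and has product
  sgn_bit (q!0) on X_0(q!0). The flip pairs up the points of any X_j with j \<ge> 1, so each
  such product is a square of \<plusminus>1, i.e. 1, and the answers win. A symmetric K is a free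
  choice of \<plusminus>1 values on X_0(c), so 2^(2^(m-1)-1) of them have the right parity, and
  distinct K give distinct answer tuples: P(\<cdot>|q) is a distribution.

  No-signalling: once the answers of all players except i are fixed, at most one answer of
  player i completes them to an element of Z, since K is already determined (for i = 0 every
  point of X_0 is seen by another player, except one point whose value the parity fixes).
  Whether a completion exists does not depend on q!i: changing q!0 is compensated by negating
  K on the flip pair of points that no player j \<ge> 1 sees.
\<close>

lemma prod_pm1_closed:
  assumes "\<And>x. x \<in> A \<Longrightarrow> g x \<in> {1::int, -1}"
  shows "prod g A \<in> {1, -1}"
proof (cases "finite A")
  case True
  from True assms show ?thesis
  proof (induction A rule: finite_induct)
    case (insert x F)
    then have "g x \<in> {1, -1}" "prod g F \<in> {1, -1}" by auto
    with insert.hyps show ?case by auto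
  qed simp
qed simp

lemma card_pm1_functions_prod_eq:
  assumes "finite A" "A \<noteq> {}" "s \<in> {1::int, -1}"
  shows "card {g \<in> A \<rightarrow>\<^sub>E {1, -1}. prod g A = s} = 2 ^ (card A - 1)"
proof -
  obtain a0 where a0: "a0 \<in> A" using assms(2) by blast
  define S where "S t = {g \<in> A \<rightarrow>\<^sub>E {1::int, -1}. prod g A = t}" for t
  define \<tau> where "\<tau> g = g(a0 := - g a0)" for g :: "'a \<Rightarrow> int"
  have prod_\<tau>: "prod (\<tau> g) A = - prod g A" for g
  proof -
    have "prod (\<tau> g) (A - {a0}) = prod g (A - {a0})"
      by (rule prod.cong) (auto simp: \<tau>_def)
    then show ?thesis
      using prod.remove[OF assms(1) a0, of g] prod.remove[OF assms(1) a0, of "\<tau> g"]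
      by (simp add: \<tau>_def)
  qed
  have \<tau>_S: "\<tau> g \<in> S (- t)" if "g \<in> S t" for g t
  proof -
    have "g a0 \<in> {1, -1}" using that a0 by (auto simp: S_def)
    then have "\<tau> g \<in> insert a0 A \<rightarrow>\<^sub>E {1, -1}"
      unfolding \<tau>_def using that by (intro PiE_fun_upd) (auto simp: S_def)
    then show ?thesis
      using that a0 by (simp add: S_def prod_\<tau> insert_absorb)
  qed
  have "bij_betw \<tau> (S 1) (S (-1))"
    by (rule bij_betw_byWitness[where f' = \<tau>])
      (use \<tau>_S[of _ 1] \<tau>_S[of _ "-1"] in \<open>auto simp: \<tau>_def\<close>)
  then have same: "card (S 1) = card (S (-1))"
    by (rule bij_betw_same_card)
  have "prod g A \<in> {1, -1}" if "g \<in> A \<rightarrow>\<^sub>E {1::int, -1}" for g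
    using that by (intro prod_pm1_closed) (auto dest: PiE_mem)
  then have "S 1 \<union> S (-1) = A \<rightarrow>\<^sub>E {1, -1}"
    by (auto simp: S_def)
  moreover have fin: "finite (A \<rightarrow>\<^sub>E {1::int, -1})"
    using assms(1) by (simp add: finite_PiE)
  moreover have "card (S 1 \<union> S (-1)) = card (S 1) + card (S (-1))"
    by (rule card_Un_disjoint) (auto simp: S_def intro: finite_subset[OF _ fin])
  ultimately have "card (S 1) + card (S (-1)) = 2 ^ card A"
    using assms(1) by (simp add: card_PiE numeral_2_eq_2)
  moreover have "card A \<ge> 1"
    using assms(1,2) by (simp add: Suc_le_eq card_gt_0_iff)
  ultimately have "card (S t) = 2 ^ (card A - 1)" if "t \<in> {1, -1}" for t
    using same that by (cases "card A") auto
  then show ?thesis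
    using assms(3) by (simp add: S_def)
qed

lemma finite_cube: "finite (cube m)"
  using finite_lists_length_eq[of "UNIV :: bool set" m] by (simp add: cube_def)

lemma card_cube: "card (cube m) = 2 ^ m"
  using card_lists_length_eq[of "UNIV :: bool set" m] by (simp add: cube_def)

lemma Xset_subset_cube: "Xset m i c \<subseteq> cube m"
  by (auto simp: Xset_def)

lemma finite_Xset: "finite (Xset m i c)"
  using finite_cube[of m] by (simp add: Xset_def)

lemma Xset_first_eq_image_Cons:
  assumes "0 < m"
  shows "Xset m 0 c = Cons c ` cube (m - 1)"
proof
  show "Xset m 0 c \<subseteq> Cons c ` cube (m - 1)"
  proof
    fix x assume "x \<in> Xset m 0 c"
    then show "x \<in> Cons c ` cube (m - 1)"
      using assms by (cases x) (auto simp: Xset_def cube_def)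
  qed
qed (use assms in \<open>auto simp: Xset_def cube_def\<close>)

lemma card_Xset_first: "0 < m \<Longrightarrow> card (Xset m 0 c) = 2 ^ (m - 1)"
  by (simp add: Xset_first_eq_image_Cons card_image card_cube)

definition flip_first :: "bool list \<Rightarrow> bool list" where
  "flip_first x = x[0 := \<not> x ! 0]"

lemma flip_first_flip_first [simp]: "flip_first (flip_first x) = x"
  by (cases x) (simp_all add: flip_first_def)

lemma length_flip_first [simp]: "length (flip_first x) = length x"
  by (simp add: flip_first_def)

lemma flip_first_in_cube_iff [simp]: "flip_first x \<in> cube m \<longleftrightarrow> x \<in> cube m"
  by (simp add: cube_def)

lemma nth_flip_first: "flip_first x ! j = (if j = 0 \<and> x \<noteq> [] then \<not> x ! 0 else x ! j)"
  by (cases x; cases j) (simp_all add: flip_first_def)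

lemma flip_first_in_Xset_first_iff:
  "0 < m \<Longrightarrow> flip_first x \<in> Xset m 0 c \<longleftrightarrow> x \<in> Xset m 0 (\<not> c)"
  by (cases x) (auto simp: Xset_def cube_def nth_flip_first)

lemma flip_first_in_Xset_iff:
  "i \<noteq> 0 \<Longrightarrow> flip_first x \<in> Xset m i c \<longleftrightarrow> x \<in> Xset m i c"
  by (simp add: Xset_def nth_flip_first)

lemma Ksym_iff:
  "K \<in> Ksym m \<longleftrightarrow> K \<in> cube m \<rightarrow>\<^sub>E {1, -1} \<and> (\<forall>x\<in>cube m. K (flip_first x) = K x)"
  by (auto simp: Ksym_def flip_first_def)

lemma prod_restrict_self: "prod (restrict g A) A = prod g A"
  by (rule prod.cong) auto

lemma restrict_Xset_in_answers:
  "K \<in> cube m \<rightarrow>\<^sub>E {1, -1} \<Longrightarrow> restrict K (Xset m i c) \<in> answers m i c"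
  by (auto simp: answers_def Xset_def)

lemma Ksym_eqI:
  assumes m: "0 < m" and K1: "K1 \<in> Ksym m" and K2: "K2 \<in> Ksym m"
    and agree: "\<And>x. x \<in> Xset m 0 c \<Longrightarrow> K1 x = K2 x"
  shows "K1 = K2"
proof
  fix x
  show "K1 x = K2 x"
  proof (cases "x \<in> cube m")
    case True
    then have "x \<in> Xset m 0 c \<or> flip_first x \<in> Xset m 0 c"
      using flip_first_in_Xset_first_iff[OF m] by (auto simp: Xset_def)
    then show ?thesis
      using True K1 K2 agree by (metis Ksym_iff)
  next
    case False
    then show ?thesis
      using K1 K2 by (metis Ksym_iff PiE_arb)
  qed
qed

lemma prod_Ksym_Xset_first_flip:
  assumes "0 < m" "K \<in> Ksym m"
  shows "prod K (Xset m 0 (\<not> c)) = prod K (Xset m 0 c)"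
  by (rule prod.reindex_bij_witness[where i = flip_first and j = flip_first])
    (use assms in \<open>auto simp: flip_first_in_Xset_first_iff Ksym_iff dest: subsetD[OF Xset_subset_cube]\<close>)

lemma prod_Ksym_Xset_eq_1:
  assumes "0 < i" "i < m" "K \<in> Ksym m"
  shows "prod K (Xset m i c) = 1"
proof -
  let ?A = "Xset m i c \<inter> {x. x ! 0}" and ?B = "Xset m i c \<inter> {x. \<not> x ! 0}"
  have "prod K (Xset m i c) = prod K ?A * prod K ?B"
    by (subst prod.union_disjoint[symmetric]) (auto simp: finite_Xset intro: prod.cong)
  moreover have "prod K ?B = prod K ?A"
    by (rule prod.reindex_bij_witness[where i = flip_first and j = flip_first])
      (use assms in \<open>auto simp: nth_flip_first Ksym_iff Xset_def cube_def\<close>)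
  moreover have "prod K ?A \<in> {1, -1}"
    using assms(3) by (intro prod_pm1_closed) (auto simp: Ksym_iff Xset_def dest: PiE_mem)
  ultimately show ?thesis
    by auto
qed

lemma bij_betw_restrict_Ksym:
  assumes m: "0 < m"
  shows "bij_betw (\<lambda>K. restrict K (Xset m 0 c)) (Ksym m) (Xset m 0 c \<rightarrow>\<^sub>E {1, -1})"
  unfolding bij_betw_def
proof
  show "inj_on (\<lambda>K. restrict K (Xset m 0 c)) (Ksym m)"
    using Ksym_eqI[OF m] by (intro inj_onI) (metis restrict_apply')
  show "(\<lambda>K. restrict K (Xset m 0 c)) ` Ksym m = Xset m 0 c \<rightarrow>\<^sub>E {1, -1}"
  proof
    show "(\<lambda>K. restrict K (Xset m 0 c)) ` Ksym m \<subseteq> Xset m 0 c \<rightarrow>\<^sub>E {1, -1}"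
      using Xset_subset_cube by (force simp: restrict_PiE_iff Ksym_iff dest: PiE_mem)
  next
    show "Xset m 0 c \<rightarrow>\<^sub>E {1, -1} \<subseteq> (\<lambda>K. restrict K (Xset m 0 c)) ` Ksym m"
    proof
      fix g assume g: "g \<in> Xset m 0 c \<rightarrow>\<^sub>E {1::int, -1}"
      define K where "K x = (if x \<in> cube m then g (if x ! 0 = c then x else flip_first x) else undefined)"
        for x
      have in_half: "(if x ! 0 = c then x else flip_first x) \<in> Xset m 0 c" if "x \<in> cube m" for x
        using that flip_first_in_Xset_first_iff[OF m, of x c] by (auto simp: Xset_def)
      have "K \<in> Ksym m"
        unfolding Ksym_iff
      proof
        show "K \<in> cube m \<rightarrow>\<^sub>E {1, -1}"
          using g in_half by (auto simp: K_def PiE_iff extensional_def)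
        show "\<forall>x\<in>cube m. K (flip_first x) = K x"
          using m by (auto simp: K_def nth_flip_first cube_def)
      qed
      moreover have "restrict K (Xset m 0 c) = g"
        using g by (auto simp: K_def Xset_def PiE_iff extensional_def)
      ultimately show "g \<in> (\<lambda>K. restrict K (Xset m 0 c)) ` Ksym m"
        by blast
    qed
  qed
qed

definition Ksym_parity :: "nat \<Rightarrow> bool \<Rightarrow> (bool list \<Rightarrow> int) set" where
  "Ksym_parity m c = {K \<in> Ksym m. prod K (Xset m 0 c) = sgn_bit c}"

lemma card_Ksym_parity:
  assumes m: "0 < m"
  shows "card (Ksym_parity m c) = 2 ^ (2 ^ (m - 1) - 1)"
proof -
  have "bij_betw (\<lambda>K. restrict K (Xset m 0 c)) (Ksym_parity m c)
          {g \<in> Xset m 0 c \<rightarrow>\<^sub>E {1, -1}. prod g (Xset m 0 c) = sgn_bit c}"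
    unfolding Ksym_parity_def
    by (rule bij_betw_Collect[OF bij_betw_restrict_Ksym[OF m]]) (simp add: prod_restrict_self)
  moreover have "Xset m 0 c \<noteq> {}"
    using card_Xset_first[OF m, of c] by auto
  moreover have "sgn_bit c \<in> {1, -1}"
    by (simp add: sgn_bit_def)
  ultimately show ?thesis
    by (simp add: bij_betw_same_card card_pm1_functions_prod_eq finite_Xset card_Xset_first[OF m])
qed

definition strategy_answers ::
    "nat \<Rightarrow> bool list \<Rightarrow> (bool list \<Rightarrow> int) \<Rightarrow> nat \<Rightarrow> bool list \<Rightarrow> int" where
  "strategy_answers m q K = (\<lambda>i\<in>{..<m}. restrict K (Xset m i (q ! i)))"

lemma strategy_answers_in_answer_tuples:
  "K \<in> Ksym m \<Longrightarrow> strategy_answers m q K \<in> answer_tuples m q"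
  unfolding strategy_answers_def answer_tuples_def restrict_PiE_iff
  by (simp add: restrict_Xset_in_answers Ksym_iff)

lemma Zset_iff_strategy_answers:
  assumes m: "0 < m"
  shows "(a, q) \<in> Zset m \<longleftrightarrow>
           q \<in> cube m \<and> (\<exists>K\<in>Ksym_parity m (q ! 0). a = strategy_answers m q K)"
proof
  assume "(a, q) \<in> Zset m"
  then obtain K where q: "q \<in> cube m" and a: "a \<in> answer_tuples m q" and K: "K \<in> Ksym m"
    and a_K: "\<forall>i<m. a i = restrict K (Xset m i (q ! i))"
    and parity: "prod (a 0) (Xset m 0 (q ! 0)) = sgn_bit (q ! 0)"
    by (auto simp: Zset_def)
  have "a = strategy_answers m q K"
  proof
    fix i
    show "a i = strategy_answers m q K i"
    proof (cases "i < m")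
      case True
      then show ?thesis using a_K by (simp add: strategy_answers_def)
    next
      case False
      then show ?thesis using a by (simp add: strategy_answers_def answer_tuples_def PiE_arb[of a])
    qed
  qed
  moreover have "K \<in> Ksym_parity m (q ! 0)"
    using K a_K[rule_format, OF m] parity by (simp add: Ksym_parity_def prod_restrict_self)
  ultimately show "q \<in> cube m \<and> (\<exists>K\<in>Ksym_parity m (q ! 0). a = strategy_answers m q K)"
    using q by blast
next
  assume "q \<in> cube m \<and> (\<exists>K\<in>Ksym_parity m (q ! 0). a = strategy_answers m q K)"
  then show "(a, q) \<in> Zset m"
    using m strategy_answers_in_answer_tuples
    by (auto simp: Zset_def Ksym_parity_def strategy_answers_def prod_restrict_self)
qed

lemma inj_on_strategy_answers:
  assumes m: "0 < m"
  shows "inj_on (strategy_answers m q) (Ksym m)"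
proof (rule inj_onI)
  fix K1 K2 assume K1: "K1 \<in> Ksym m" and K2: "K2 \<in> Ksym m"
    and eq: "strategy_answers m q K1 = strategy_answers m q K2"
  have "restrict K1 (Xset m 0 (q ! 0)) = restrict K2 (Xset m 0 (q ! 0))"
    using fun_cong[OF eq, of 0] m by (simp add: strategy_answers_def)
  then show "K1 = K2"
    using Ksym_eqI[OF m K1 K2] by (metis restrict_apply')
qed

lemma card_Zset_slice:
  assumes m: "0 < m" and q: "q \<in> cube m"
  shows "card {a \<in> answer_tuples m q. (a, q) \<in> Zset m} = 2 ^ (2 ^ (m - 1) - 1)"
proof -
  have "{a \<in> answer_tuples m q. (a, q) \<in> Zset m} = strategy_answers m q ` Ksym_parity m (q ! 0)"
    using q strategy_answers_in_answer_tuples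
    by (auto simp: Zset_iff_strategy_answers[OF m] Ksym_parity_def)
  moreover have "inj_on (strategy_answers m q) (Ksym_parity m (q ! 0))"
    using inj_on_strategy_answers[OF m] by (rule inj_on_subset) (simp add: Ksym_parity_def)
  ultimately show ?thesis
    by (simp add: card_image card_Ksym_parity[OF m])
qed

lemma Zset_imp_win:
  assumes m: "0 < m" and Z: "(a, q) \<in> Zset m"
  shows "win m q a"
proof -
  obtain K where K: "K \<in> Ksym_parity m (q ! 0)" and a: "a = strategy_answers m q K"
    using Z by (auto simp: Zset_iff_strategy_answers[OF m])
  have "prod (a 0) (Xset m 0 (q ! 0)) = sgn_bit (q ! 0)"
    using K m by (simp add: a strategy_answers_def prod_restrict_self Ksym_parity_def)
  moreover have "prod (a i) (Xset m i (q ! i)) = 1" if "i \<in> {1..<m}" for i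
    using that K prod_Ksym_Xset_eq_1[of i m K]
    by (simp add: a strategy_answers_def prod_restrict_self Ksym_parity_def)
  moreover have "a i x = a j x"
    if "i < m" "j < m" "x \<in> Xset m i (q ! i) \<inter> Xset m j (q ! j)" for i j x
    using that by (simp add: a strategy_answers_def)
  ultimately show ?thesis
    unfolding win_def by blast
qed

lemma sum_Pcorr_eq_card:
  assumes "finite A"
  shows "(\<Sum>x\<in>A. Pcorr m (h x) q) = card {x \<in> A. (h x, q) \<in> Zset m} / 2 ^ (2 ^ (m - 1) - 1)"
  using assms by (simp add: Pcorr_def sum.If_cases Int_def)

lemma finite_answers: "finite (answers m i c)"
  by (simp add: answers_def finite_PiE finite_Xset)

lemma finite_answer_tuples: "finite (answer_tuples m q)"
  by (simp add: answer_tuples_def finite_PiE finite_answers)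

lemma sum_Pcorr_answer_tuples:
  assumes "0 < m" "q \<in> cube m"
  shows "(\<Sum>a\<in>answer_tuples m q. Pcorr m a q) = 1"
  using sum_Pcorr_eq_card[OF finite_answer_tuples, where h = "\<lambda>a. a"] card_Zset_slice[OF assms]
  by simp

definition seen_by_others :: "nat \<Rightarrow> bool list \<Rightarrow> bool list set" where
  "seen_by_others m q = (\<Union>j\<in>{1..<m}. Xset m j (q ! j))"

definition unseen_point :: "bool list \<Rightarrow> bool \<Rightarrow> bool list" where
  "unseen_point q c = c # map Not (tl q)"

lemma unseen_point_in_Xset_first:
  "0 < m \<Longrightarrow> q \<in> cube m \<Longrightarrow> unseen_point q c \<in> Xset m 0 c"
  by (simp add: unseen_point_def Xset_def cube_def)

lemma unseen_point_not_seen: "q \<in> cube m \<Longrightarrow> unseen_point q c \<notin> seen_by_others m q"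
  by (auto simp: seen_by_others_def unseen_point_def Xset_def cube_def nth_tl nth_Cons')

lemma Xset_first_eq_insert_unseen_point:
  assumes m: "0 < m" and q: "q \<in> cube m"
  shows "Xset m 0 c = insert (unseen_point q c) (Xset m 0 c \<inter> seen_by_others m q)"
proof -
  have "x = unseen_point q c" if x: "x \<in> Xset m 0 c" "x \<notin> seen_by_others m q" for x
  proof (rule nth_equalityI)
    show "length x = length (unseen_point q c)"
      using x q m by (simp add: Xset_def cube_def unseen_point_def)
    fix j assume "j < length x"
    then show "x ! j = unseen_point q c ! j"
      using x q by (cases j) (auto simp: seen_by_others_def Xset_def cube_def unseen_point_def nth_tl)
  qed
  then show ?thesis
    using unseen_point_in_Xset_first[OF m q] by blast
qed

lemma prod_Xset_first_split:
  assumes "0 < m" "q \<in> cube m"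
  shows "prod K (Xset m 0 c) = K (unseen_point q c) * prod K (Xset m 0 c \<inter> seen_by_others m q)"
  by (subst Xset_first_eq_insert_unseen_point[OF assms])
    (simp add: finite_Xset unseen_point_not_seen[OF assms(2)])

lemma flip_first_in_seen_by_others_iff:
  "flip_first x \<in> seen_by_others m q \<longleftrightarrow> x \<in> seen_by_others m q"
  by (auto simp: seen_by_others_def flip_first_in_Xset_iff)

lemma Ksym_parity_eqI:
  assumes m: "0 < m" and i: "i < m" and q: "q \<in> cube m"
    and K1: "K1 \<in> Ksym_parity m (q ! 0)" and K2: "K2 \<in> Ksym_parity m (q ! 0)"
    and agree: "\<And>j x. j < m \<Longrightarrow> j \<noteq> i \<Longrightarrow> x \<in> Xset m j (q ! j) \<Longrightarrow> K1 x = K2 x"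
  shows "K1 = K2"
proof (rule Ksym_eqI[OF m])
  show "K1 \<in> Ksym m" "K2 \<in> Ksym m"
    using K1 K2 by (simp_all add: Ksym_parity_def)
  fix x assume x: "x \<in> Xset m 0 (q ! 0)"
  show "K1 x = K2 x"
  proof (cases "i = 0")
    case False
    then show ?thesis using agree[OF m _ x] by simp
  next
    case True
    let ?S = "Xset m 0 (q ! 0) \<inter> seen_by_others m q" and ?u = "unseen_point q (q ! 0)"
    have seen: "K1 y = K2 y" if y: "y \<in> seen_by_others m q" for y
    proof -
      obtain j where "j \<in> {1..<m}" "y \<in> Xset m j (q ! j)"
        using y by (auto simp: seen_by_others_def)
      then show ?thesis
        using agree[of j y] True by simp
    qed
    have "prod K1 ?S = prod K2 ?S"
      using seen by (intro prod.cong) auto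
    moreover have "prod K1 ?S \<in> {1, -1}"
      using K1 by (intro prod_pm1_closed) (auto simp: Ksym_parity_def Ksym_iff Xset_def dest: PiE_mem)
    moreover have "K1 ?u * prod K1 ?S = K2 ?u * prod K2 ?S"
      using K1 K2 prod_Xset_first_split[OF m q, of K1] prod_Xset_first_split[OF m q, of K2]
      by (simp add: Ksym_parity_def)
    ultimately have "K1 ?u = K2 ?u"
      by auto
    moreover have "x = ?u \<or> x \<in> seen_by_others m q"
      using x Xset_first_eq_insert_unseen_point[OF m q, of "q ! 0"] by blast
    ultimately show ?thesis
      using seen by blast
  qed
qed

lemma Ksym_parity_flip_exists:
  assumes m: "0 < m" and q: "q \<in> cube m" and K: "K \<in> Ksym_parity m c"
  shows "\<exists>K'\<in>Ksym_parity m (\<not> c). \<forall>x\<in>seen_by_others m q. K' x = K x"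
proof
  \<comment> \<open>the points of the cube seen by no player j \<ge> 1 form a flip pair, one of them on X_0(\<not> c)\<close>
  define K' where "K' x = (if x \<in> cube m - seen_by_others m q then - K x else K x)" for x
  let ?S = "Xset m 0 (\<not> c) \<inter> seen_by_others m q" and ?u = "unseen_point q (\<not> c)"
  have Ksym: "K \<in> Ksym m"
    using K by (simp add: Ksym_parity_def)
  show "\<forall>x\<in>seen_by_others m q. K' x = K x"
    by (simp add: K'_def)
  have "K' \<in> Ksym m"
    unfolding Ksym_iff
  proof
    have "K' x \<in> {1, -1}" if "x \<in> cube m" for x
      using that Ksym PiE_mem[of K "cube m" "\<lambda>_. {1, -1}" x] by (auto simp: Ksym_iff K'_def)
    moreover have "K' x = undefined" if "x \<notin> cube m" for x
      using that Ksym PiE_arb[of K "cube m" "\<lambda>_. {1, -1}" x] by (simp add: Ksym_iff K'_def)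
    ultimately show "K' \<in> cube m \<rightarrow>\<^sub>E {1, -1}"
      by (auto simp: PiE_iff extensional_def)
    show "\<forall>x\<in>cube m. K' (flip_first x) = K' x"
      using Ksym by (simp add: Ksym_iff K'_def flip_first_in_seen_by_others_iff)
  qed
  moreover have "prod K' (Xset m 0 (\<not> c)) = sgn_bit (\<not> c)"
  proof -
    have "?u \<in> cube m"
      using unseen_point_in_Xset_first[OF m q] Xset_subset_cube by blast
    then have "K' ?u = - K ?u"
      using unseen_point_not_seen[OF q] by (simp add: K'_def)
    moreover have "prod K' ?S = prod K ?S"
      by (intro prod.cong) (auto simp: K'_def)
    ultimately have "prod K' (Xset m 0 (\<not> c)) = - prod K (Xset m 0 (\<not> c))"
      using prod_Xset_first_split[OF m q, of K'] prod_Xset_first_split[OF m q, of K] by simp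
    also have "\<dots> = - prod K (Xset m 0 c)"
      using prod_Ksym_Xset_first_flip[OF m Ksym] by simp
    finally show ?thesis
      using K by (simp add: Ksym_parity_def sgn_bit_def)
  qed
  ultimately show "K' \<in> Ksym_parity m (\<not> c)"
    by (simp add: Ksym_parity_def)
qed

lemma Ksym_parity_transfer:
  assumes m: "0 < m" and i: "i < m" and q: "q \<in> cube m"
    and agree: "\<And>j. j < m \<Longrightarrow> j \<noteq> i \<Longrightarrow> q' ! j = q ! j"
    and K: "K \<in> Ksym_parity m (q ! 0)"
  shows "\<exists>K'\<in>Ksym_parity m (q' ! 0). \<forall>j<m. j \<noteq> i \<longrightarrow> (\<forall>x\<in>Xset m j (q ! j). K' x = K x)"
proof (cases "q' ! 0 = q ! 0")
  case True
  then show ?thesis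
    using K by auto
next
  case False
  then have "i = 0" "q' ! 0 = (\<not> q ! 0)"
    using agree[OF m] by auto
  moreover obtain K' where "K' \<in> Ksym_parity m (\<not> q ! 0)" and seen: "\<forall>x\<in>seen_by_others m q. K' x = K x"
    using Ksym_parity_flip_exists[OF m q K] by blast
  moreover have "\<forall>j<m. j \<noteq> 0 \<longrightarrow> (\<forall>x\<in>Xset m j (q ! j). K' x = K x)"
    using seen by (auto simp: seen_by_others_def)
  ultimately show ?thesis
    by auto
qed

lemma completion_unique:
  assumes m: "0 < m" and i: "i < m"
    and f1: "(b(i := f1), q) \<in> Zset m" and f2: "(b(i := f2), q) \<in> Zset m"
  shows "f1 = f2"
proof -
  obtain K1 where K1: "K1 \<in> Ksym_parity m (q ! 0)" and b1: "b(i := f1) = strategy_answers m q K1"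
    and q: "q \<in> cube m"
    using f1 by (auto simp: Zset_iff_strategy_answers[OF m])
  obtain K2 where K2: "K2 \<in> Ksym_parity m (q ! 0)" and b2: "b(i := f2) = strategy_answers m q K2"
    using f2 by (auto simp: Zset_iff_strategy_answers[OF m])
  have "K1 x = K2 x" if "j < m" "j \<noteq> i" "x \<in> Xset m j (q ! j)" for j x
    using fun_cong[OF b1, of j] fun_cong[OF b2, of j] that
    by (simp add: strategy_answers_def) (metis restrict_apply')
  then have "K1 = K2"
    using Ksym_parity_eqI[OF m i q K1 K2] by blast
  then show ?thesis
    using fun_cong[OF b1, of i] fun_cong[OF b2, of i] by simp
qed

lemma completion_transfer:
  assumes m: "0 < m" and i: "i < m" and q': "q' \<in> cube m"
    and agree: "\<And>j. j < m \<Longrightarrow> j \<noteq> i \<Longrightarrow> q' ! j = q ! j"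
    and f: "(b(i := f), q) \<in> Zset m"
  shows "\<exists>f'\<in>answers m i (q' ! i). (b(i := f'), q') \<in> Zset m"
proof -
  obtain K where K: "K \<in> Ksym_parity m (q ! 0)" and b: "b(i := f) = strategy_answers m q K"
    and q: "q \<in> cube m"
    using f by (auto simp: Zset_iff_strategy_answers[OF m])
  obtain K' where K': "K' \<in> Ksym_parity m (q' ! 0)"
    and same: "\<forall>j<m. j \<noteq> i \<longrightarrow> (\<forall>x\<in>Xset m j (q ! j). K' x = K x)"
    using Ksym_parity_transfer[OF m i q agree K] by blast
  have "b(i := strategy_answers m q' K' i) = strategy_answers m q' K'"
  proof
    fix j
    show "(b(i := strategy_answers m q' K' i)) j = strategy_answers m q' K' j"
      using fun_cong[OF b, of j] same agree
      by (cases "j = i"; cases "j < m") (auto simp: strategy_answers_def)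
  qed
  moreover have "strategy_answers m q' K' i \<in> answers m i (q' ! i)"
    using K' i by (simp add: strategy_answers_def restrict_Xset_in_answers Ksym_parity_def Ksym_iff)
  ultimately show ?thesis
    using K' q' by (metis Zset_iff_strategy_answers[OF m])
qed

lemma if_win_Pcorr_eq:
  assumes "0 < m"
  shows "(if win m q a then Pcorr m a q else 0) = Pcorr m a q"
  using Zset_imp_win[OF assms] by (simp add: Pcorr_def)

lemma no_signalling:
  assumes m: "0 < m" and i: "i < m" and q: "q \<in> cube m" and q': "q' \<in> cube m"
    and agree: "\<And>j. j < m \<Longrightarrow> j \<noteq> i \<Longrightarrow> q ! j = q' ! j"
  shows "(\<Sum>f\<in>answers m i (q ! i). Pcorr m (b(i := f)) q)
       = (\<Sum>f\<in>answers m i (q' ! i). Pcorr m (b(i := f)) q')"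
proof -
  define C where "C r = {f \<in> answers m i (r ! i). (b(i := f), r) \<in> Zset m}" for r
  have "finite (C r)" for r
    using finite_answers by (simp add: C_def)
  then have card_C: "card (C r) = (if C r = {} then 0 else 1)" for r
    by (auto simp: card_le_Suc0_iff_eq Suc_le_eq card_gt_0_iff C_def
        intro!: le_antisym completion_unique[OF m i])
  have transfer: "C r' \<noteq> {}"
    if nonempty: "C r \<noteq> {}" and r': "r' \<in> cube m"
      and agree_r: "\<And>j. j < m \<Longrightarrow> j \<noteq> i \<Longrightarrow> r' ! j = r ! j" for r r'
  proof -
    obtain f where "(b(i := f), r) \<in> Zset m"
      using nonempty by (auto simp: C_def)
    then obtain f' where "f' \<in> answers m i (r' ! i)" "(b(i := f'), r') \<in> Zset m"
      using completion_transfer[OF m i r' agree_r] by blast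
    then show ?thesis
      by (auto simp: C_def)
  qed
  have "C q = {} \<longleftrightarrow> C q' = {}"
    using transfer[of q q'] transfer[of q' q] q q' agree by metis
  then have "card (C q) = card (C q')"
    using card_C[of q] card_C[of q'] by simp
  then show ?thesis
    by (simp add: sum_Pcorr_eq_card finite_answers C_def)
qed

theorem mainTheorem4:
  fixes m :: nat
  assumes "m \<ge> 2"
  shows
   "(\<forall>q\<in>cube m. (\<forall>a. Pcorr m a q \<ge> 0) \<and> (\<Sum>a\<in>answer_tuples m q. Pcorr m a q) = 1)
    \<and> (\<forall>i<m. \<forall>q\<in>cube m. \<forall>q'\<in>cube m. (\<forall>j<m. j \<noteq> i \<longrightarrow> q ! j = q' ! j) \<longrightarrow>
          (\<forall>b \<in> (\<Pi>\<^sub>E j\<in>{..<m} - {i}. answers m j (q ! j)).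
             (\<Sum>f\<in>answers m i (q ! i). Pcorr m (b(i := f)) q)
           = (\<Sum>f\<in>answers m i (q' ! i). Pcorr m (b(i := f)) q')))
    \<and> (\<forall>q\<in>cube m. \<forall>a\<in>answer_tuples m q. Pcorr m a q > 0 \<longrightarrow> win m q a)
    \<and> (\<Sum>q\<in>cube m. (1 / 2 ^ m) *
          (\<Sum>a\<in>answer_tuples m q. if win m q a then Pcorr m a q else 0)) = (1::real)"
proof -
  have m: "0 < m"
    using assms by simp
  have nonneg: "Pcorr m a q \<ge> 0" for a q
    by (simp add: Pcorr_def)
  have wins: "win m q a" if "Pcorr m a q > 0" for q a
    using that Zset_imp_win[OF m] by (simp add: Pcorr_def split: if_splits)
  have total: "(\<Sum>q\<in>cube m. (1 / 2 ^ m) *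
      (\<Sum>a\<in>answer_tuples m q. if win m q a then Pcorr m a q else 0)) = (1::real)"
    by (simp add: if_win_Pcorr_eq[OF m] sum_Pcorr_answer_tuples[OF m] card_cube)
  have signalling_free: "\<forall>i<m. \<forall>q\<in>cube m. \<forall>q'\<in>cube m. (\<forall>j<m. j \<noteq> i \<longrightarrow> q ! j = q' ! j) \<longrightarrow>
      (\<forall>b \<in> (\<Pi>\<^sub>E j\<in>{..<m} - {i}. answers m j (q ! j)).
         (\<Sum>f\<in>answers m i (q ! i). Pcorr m (b(i := f)) q)
       = (\<Sum>f\<in>answers m i (q' ! i). Pcorr m (b(i := f)) q'))"
    by (intro allI ballI impI no_signalling[OF m]) auto
  show ?thesis
    using nonneg sum_Pcorr_answer_tuples[OF m] wins by (intro conjI signalling_free total) auto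
qed

end
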